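(* Let ${\cal H}\subset{\cal H}_0$, ${\mathcal D}$, $b$, $\mu_\ell^{-1}$, $\epsilon_\ell$, $a_\ell$ ($\ell=1,2$) be as in the context (the standing assumptions there hold), and let ${\cal H}_N\subset{\cal H}$ be a finite-dimensional subspace. Suppose that, with $0<C_{{\rm dis},N,1}<\infty$, $$\inf_{u_N\in{\cal H}_N\setminus\{0\}}\sup_{v_N\in{\cal H}_N\setminus\{0\}}\frac{|a_1(u_N,v_N)|}{\|u_N\|_{{\cal H}}\|v_N\|_{{\cal H}}}\ge\frac{1}{C_{{\rm dis},N,1}},$$ for all $v_N\in{\cal H}_N\setminus\{0\}$, $\sup_{u_N\in{\cal H}_N\setminus\{0\}}|a_1(u_N,v_N)|>0$, and $$\Big(\|\mu_1^{-1}-\mu_2^{-1}\|_{{\cal H}_0\to{\cal H}_0}+\|\epsilon_1-\epsilon_2\|_{{\cal H}_0\to{\cal H}_0}\Big)C_{{\rm dis},N,1}\le\tfrac12.$$ Then $$\inf_{u_N\in{\cal H}_N\setminus\{0\}}\sup_{v_N\in{\cal H}_N\setminus\{0\}}\frac{|a_2(u_N,v_N)|}{\|u_N\|_{{\cal H}}\|v_N\|_{{\cal H}}}\ge\frac{1}{2C_{{\rm dis},N,1}}$$ and, for all $v_N\in{\cal H}_N\setminus\{0\}$, $\sup_{u_N\in{\cal H}_N\setminus\{0\}}|a_2(u_N,v_N)|>0$.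
   Context: Standing assumptions: ${\cal H}\subset{\cal H}_0$ are complex Hilbert spaces with $\|v\|_{{\cal H}_0}\le\|v\|_{{\cal H}}$ for $v\in{\cal H}$, and ${\cal H}_0$ is identified with its dual so that ${\cal H}\subset{\cal H}_0\subset{\cal H}^*$. ${\mathcal D}:{\cal H}\to{\cal H}_0$ is linear with $\|{\mathcal D}\|_{{\cal H}\to{\cal H}_0}\le 1$; $b(\cdot,\cdot)$ is a continuous sesquilinear form on ${\cal H}$; for $\ell=1,2$, $\mu_\ell^{-1}:{\cal H}_0\to{\cal H}_0$ and $\epsilon_\ell:{\cal H}_0\to{\cal H}_0$ are bounded linear operators, and $a_\ell(u,v):=(\mu_\ell^{-1}{\mathcal D}u,{\mathcal D}v)_{{\cal H}_0}+b(u,v)-(\epsilon_\ell u,v)_{{\cal H}_0}$. For $\ell=1,2$ there exist $C_{{\rm G1},\ell},C_{{\rm G2},\ell}>0$ with $|a_\ell(v,v)+C_{{\rm G2},\ell}\|v\|_{{\cal H}_0}^2|\ge C_{{\rm G1},\ell}\|v\|_{{\cal H}}^2$ for all $v\in{\cal H}$. *)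

theory Defs
  imports "HOL-Analysis.Analysis"
begin

text \<open>A complex vector space is modelled as a type 'v with a scalar multiplication
  sc :: complex => 'v => 'v satisfying the vector_space axioms.\<close>

definition cinner_on :: "(complex \<Rightarrow> 'v::ab_group_add \<Rightarrow> 'v) \<Rightarrow> 'v set \<Rightarrow> ('v \<Rightarrow> 'v \<Rightarrow> complex) \<Rightarrow> bool" where
  "cinner_on sc V ip \<longleftrightarrow> module.subspace sc V \<and>
     (\<forall>x\<in>V. \<forall>y\<in>V. \<forall>z\<in>V. ip (x + y) z = ip x z + ip y z) \<and>
     (\<forall>c. \<forall>x\<in>V. \<forall>y\<in>V. ip (sc c x) y = c * ip x y) \<and>
     (\<forall>x\<in>V. \<forall>y\<in>V. ip y x = cnj (ip x y)) \<and>
     (\<forall>x\<in>V. Im (ip x x) = 0 \<and> 0 \<le> Re (ip x x)) \<and>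
     (\<forall>x\<in>V. ip x x = 0 \<longrightarrow> x = 0)"

definition cnorm :: "('v \<Rightarrow> 'v \<Rightarrow> complex) \<Rightarrow> 'v \<Rightarrow> real" where
  "cnorm ip x = sqrt (Re (ip x x))"

definition chilbert_on :: "(complex \<Rightarrow> 'v::ab_group_add \<Rightarrow> 'v) \<Rightarrow> 'v set \<Rightarrow> ('v \<Rightarrow> 'v \<Rightarrow> complex) \<Rightarrow> bool" where
  "chilbert_on sc V ip \<longleftrightarrow> cinner_on sc V ip \<and>
     (\<forall>X. (\<forall>n. X n \<in> V) \<and> (\<forall>e>0. \<exists>N. \<forall>m\<ge>N. \<forall>n\<ge>N. cnorm ip (X m - X n) < e)
          \<longrightarrow> (\<exists>l\<in>V. (\<lambda>n. cnorm ip (X n - l)) \<longlonglongrightarrow> 0))"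

definition clinear_on :: "(complex \<Rightarrow> 'v::ab_group_add \<Rightarrow> 'v) \<Rightarrow> 'v set \<Rightarrow> ('v \<Rightarrow> 'v) \<Rightarrow> bool" where
  "clinear_on sc V f \<longleftrightarrow> (\<forall>x\<in>V. \<forall>y\<in>V. f (x + y) = f x + f y) \<and>
     (\<forall>c. \<forall>x\<in>V. f (sc c x) = sc c (f x))"

definition sesq_on :: "(complex \<Rightarrow> 'v::ab_group_add \<Rightarrow> 'v) \<Rightarrow> 'v set \<Rightarrow> ('v \<Rightarrow> 'v \<Rightarrow> complex) \<Rightarrow> bool" where
  "sesq_on sc V b \<longleftrightarrow>
     (\<forall>x\<in>V. \<forall>y\<in>V. \<forall>z\<in>V. b (x + y) z = b x z + b y z) \<and>
     (\<forall>c. \<forall>x\<in>V. \<forall>y\<in>V. b (sc c x) y = c * b x y) \<and>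
     (\<forall>x\<in>V. \<forall>y\<in>V. \<forall>z\<in>V. b x (y + z) = b x y + b x z) \<and>
     (\<forall>c. \<forall>x\<in>V. \<forall>y\<in>V. b x (sc c y) = cnj c * b x y)"

text \<open>Operator norm of T : H0 -> H0, where H0 is the whole type with norm n0.\<close>
definition opnorm :: "('v \<Rightarrow> real) \<Rightarrow> ('v \<Rightarrow> 'v) \<Rightarrow> real" where
  "opnorm n0 T = Inf {K. 0 \<le> K \<and> (\<forall>x. n0 (T x) \<le> K * n0 x)}"

definition aform :: "('v \<Rightarrow> 'v \<Rightarrow> complex) \<Rightarrow> ('v \<Rightarrow> 'v) \<Rightarrow> ('v \<Rightarrow> 'v \<Rightarrow> complex)
     \<Rightarrow> ('v \<Rightarrow> 'v) \<Rightarrow> ('v \<Rightarrow> 'v) \<Rightarrow> 'v \<Rightarrow> 'v \<Rightarrow> complex" where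
  "aform ip0 D b muinv eps u v = ip0 (muinv (D u)) (D v) + b u v - ip0 (eps u) v"

end

theory Submission
  imports Defs
begin

(*
  By Cauchy-Schwarz and the bounds on D and on the embedding of H into H0,
  |a1(u,v) - a2(u,v)| <= delta |u|_H |v|_H with
  delta = |mu1^-1 - mu2^-1| + |eps1 - eps2| <= 1/(2 Cdis), so every inf-sup quotient
  of a2 is at least that of a1 minus 1/(2 Cdis).

  The inf-sup bound for a2 says that a2(u,.) does not vanish on HN for u /= 0.  For a
  basis (b_j) of HN the map g u = sum_j a2(u,b_j) b_j is therefore an injective, hence
  surjective, linear endomorphism of HN; writing v = g u gives
  a2(u,v) = sum_j |a2(u,b_j)|^2, which is positive for v /= 0.
*)

lemma cnorm_nonneg_on:
  assumes "cinner_on sc V ip" "x \<in> V"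
  shows "0 \<le> cnorm ip x"
proof -
  have "0 \<le> Re (ip x x)" using assms unfolding cinner_on_def by blast
  then show ?thesis unfolding cnorm_def by simp
qed

lemma cnorm_pos_on:
  assumes "cinner_on sc V ip" "x \<in> V" "x \<noteq> 0"
  shows "0 < cnorm ip x"
proof -
  have "Im (ip x x) = 0" "0 \<le> Re (ip x x)" "ip x x \<noteq> 0"
    using assms unfolding cinner_on_def by blast+
  then have "0 < Re (ip x x)" by (auto simp: complex_eq_iff)
  then show ?thesis unfolding cnorm_def by simp
qed

lemma
  assumes nonneg: "\<And>x. 0 \<le> n x" and bounded: "\<exists>K. \<forall>x. n (T x) \<le> K * n x"
  shows opnorm_bound: "n (T x) \<le> opnorm n T * n x"
    and opnorm_nonneg: "0 \<le> opnorm n T"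
proof -
  define Ks where "Ks = {K. 0 \<le> K \<and> (\<forall>x. n (T x) \<le> K * n x)}"
  obtain K where K: "\<forall>x. n (T x) \<le> K * n x" using bounded by blast
  have max_bound: "n (T x) \<le> max K 0 * n x" for x
    using K mult_right_mono[OF max.cobounded1 nonneg[of x]] by (meson order_trans)
  then have "max K 0 \<in> Ks" unfolding Ks_def by simp
  then have "Ks \<noteq> {}" by blast
  then show "0 \<le> opnorm n T" unfolding opnorm_def Ks_def[symmetric] by (rule cInf_greatest) (simp add: Ks_def)
  show "n (T x) \<le> opnorm n T * n x"
  proof (cases "n x = 0")
    case True
    then show ?thesis using max_bound[of x] by simp
  next
    case False
    then have "0 < n x" using nonneg[of x] by simp
    have "n (T x) / n x \<le> opnorm n T" unfolding opnorm_def Ks_def[symmetric]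
      by (rule cInf_greatest[OF \<open>Ks \<noteq> {}\<close>]) (use \<open>0 < n x\<close> in \<open>auto simp: Ks_def field_simps\<close>)
    then show ?thesis using \<open>0 < n x\<close> by (simp add: field_simps)
  qed
qed

locale cinner_space =
  fixes sc :: "complex \<Rightarrow> 'v::ab_group_add \<Rightarrow> 'v" and ip :: "'v \<Rightarrow> 'v \<Rightarrow> complex"
  assumes cinner_on: "cinner_on sc UNIV ip"
begin

lemma ip_add_left: "ip (x + y) z = ip x z + ip y z"
  using cinner_on unfolding cinner_on_def by (metis UNIV_I)

lemma ip_scale_left: "ip (sc c x) y = c * ip x y"
  using cinner_on unfolding cinner_on_def by (metis UNIV_I)

lemma ip_cnj: "ip y x = cnj (ip x y)"
  using cinner_on unfolding cinner_on_def by (metis UNIV_I)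

lemma ip_self: "ip x x = of_real ((cnorm ip x)\<^sup>2)"
proof -
  have "Im (ip x x) = 0 \<and> 0 \<le> Re (ip x x)"
    using cinner_on unfolding cinner_on_def by (metis UNIV_I)
  then show ?thesis unfolding cnorm_def by (simp add: complex_eq_iff)
qed

lemma cnorm_nonneg: "0 \<le> cnorm ip x"
  using cnorm_nonneg_on[OF cinner_on] by simp

lemma ip_diff_left: "ip (x - y) z = ip x z - ip y z"
  using ip_add_left[of "x - y" y z] by simp

lemma ip_add_right: "ip z (x + y) = ip z x + ip z y"
  by (subst (1 2 3) ip_cnj) (simp add: ip_add_left)

lemma ip_diff_right: "ip z (x - y) = ip z x - ip z y"
  by (subst (1 2 3) ip_cnj) (simp add: ip_diff_left)

lemma ip_scale_right: "ip x (sc c y) = cnj c * ip x y"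
  by (subst (1 2) ip_cnj) (simp add: ip_scale_left)

lemma cauchy_schwarz: "cmod (ip x y) \<le> cnorm ip x * cnorm ip y"
proof (cases "y = 0")
  case True
  then show ?thesis using ip_add_right[of x 0 0] cnorm_nonneg by simp
next
  case False
  define r where "r = (cnorm ip y)\<^sup>2"
  define t where "t = ip x y / of_real r"
  have "0 < r" using cnorm_pos_on[OF cinner_on _ False] by (simp add: r_def)
  have "of_real ((cnorm ip (x - sc t y))\<^sup>2) = ip (x - sc t y) (x - sc t y)"
    by (simp add: ip_self)
  also have "\<dots> = ip x x - cnj t * ip x y - t * cnj (ip x y) + t * cnj t * of_real r"
    by (simp add: ip_diff_left ip_diff_right ip_scale_left ip_scale_right ip_cnj[of x y]
        ip_self[of y] r_def algebra_simps)
  also have "\<dots> = of_real ((cnorm ip x)\<^sup>2 - (cmod (ip x y))\<^sup>2 / r)"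
    using \<open>0 < r\<close> by (simp add: t_def ip_self[of x] complex_norm_square[symmetric] field_simps)
  finally have "0 \<le> (cnorm ip x)\<^sup>2 - (cmod (ip x y))\<^sup>2 / r"
    by (metis of_real_eq_iff zero_le_power2)
  then have "(cmod (ip x y))\<^sup>2 \<le> (cnorm ip x * cnorm ip y)\<^sup>2"
    using \<open>0 < r\<close> by (simp add: r_def field_simps power_mult_distrib)
  then show ?thesis
    by (rule power2_le_imp_le) (simp add: cnorm_nonneg)
qed

lemma cnorm_diff_le: "cnorm ip (x - y) \<le> cnorm ip x + cnorm ip y"
proof -
  have "of_real ((cnorm ip (x - y))\<^sup>2) = ip (x - y) (x - y)"
    by (simp add: ip_self)
  also have "\<dots> = ip x x - ip x y - ip y x + ip y y"
    by (simp add: ip_diff_left ip_diff_right)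
  also have "\<dots> = of_real ((cnorm ip x)\<^sup>2 + (cnorm ip y)\<^sup>2 - 2 * Re (ip x y))"
    by (simp add: ip_self[of x] ip_self[of y] ip_cnj[of x y] complex_eq_iff)
  finally have "(cnorm ip (x - y))\<^sup>2 = (cnorm ip x)\<^sup>2 + (cnorm ip y)\<^sup>2 - 2 * Re (ip x y)"
    using of_real_eq_iff by blast
  also have "\<dots> \<le> (cnorm ip x + cnorm ip y)\<^sup>2"
    using abs_Re_le_cmod[of "ip x y"] cauchy_schwarz[of x y] by (simp add: power2_sum)
  finally show ?thesis
    by (rule power2_le_imp_le) (simp add: cnorm_nonneg)
qed

lemma bounded_op_diff:
  assumes "\<exists>K. \<forall>x. cnorm ip (S x) \<le> K * cnorm ip x" "\<exists>K. \<forall>x. cnorm ip (T x) \<le> K * cnorm ip x"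
  shows "\<exists>K. \<forall>x. cnorm ip (S x - T x) \<le> K * cnorm ip x"
proof -
  obtain K L where "\<forall>x. cnorm ip (S x) \<le> K * cnorm ip x" "\<forall>x. cnorm ip (T x) \<le> L * cnorm ip x"
    using assms by blast
  then have "cnorm ip (S x - T x) \<le> (K + L) * cnorm ip x" for x
    using cnorm_diff_le[of "S x" "T x"] by (smt (verit) distrib_right)
  then show ?thesis by blast
qed

lemma aform_sesq_on:
  assumes D: "clinear_on sc H D" and b: "sesq_on sc H b"
    and mu: "Vector_Spaces.linear sc sc muinv" and eps: "Vector_Spaces.linear sc sc eps"
  shows "sesq_on sc H (aform ip D b muinv eps)"
proof -
  have "muinv (x + y) = muinv x + muinv y" "muinv (sc c x) = sc c (muinv x)"
    "eps (x + y) = eps x + eps y" "eps (sc c x) = sc c (eps x)" for x y c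
    using mu eps unfolding Vector_Spaces.linear_iff by simp_all
  with D b show ?thesis
    unfolding sesq_on_def clinear_on_def aform_def
    by (simp add: ip_add_left ip_scale_left ip_add_right ip_scale_right algebra_simps)
qed

lemma aform_diff_le:
  assumes mu1: "\<exists>K. \<forall>x. cnorm ip (mu1 x) \<le> K * cnorm ip x"
    and mu2: "\<exists>K. \<forall>x. cnorm ip (mu2 x) \<le> K * cnorm ip x"
    and eps1: "\<exists>K. \<forall>x. cnorm ip (eps1 x) \<le> K * cnorm ip x"
    and eps2: "\<exists>K. \<forall>x. cnorm ip (eps2 x) \<le> K * cnorm ip x"
    and u: "cnorm ip (D u) \<le> nu" "cnorm ip u \<le> nu"
    and v: "cnorm ip (D v) \<le> nv" "cnorm ip v \<le> nv"
  shows "cmod (aform ip D b mu1 eps1 u v - aform ip D b mu2 eps2 u v)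
    \<le> (opnorm (cnorm ip) (\<lambda>x. mu1 x - mu2 x) + opnorm (cnorm ip) (\<lambda>x. eps1 x - eps2 x)) * (nu * nv)"
proof -
  define dm where "dm = opnorm (cnorm ip) (\<lambda>x. mu1 x - mu2 x)"
  define de where "de = opnorm (cnorm ip) (\<lambda>x. eps1 x - eps2 x)"
  note mu_bd = bounded_op_diff[OF mu1 mu2] and eps_bd = bounded_op_diff[OF eps1 eps2]
  have dm: "\<And>x. cnorm ip (mu1 x - mu2 x) \<le> dm * cnorm ip x" "0 \<le> dm"
    unfolding dm_def
    by (rule opnorm_bound[OF cnorm_nonneg mu_bd]) (rule opnorm_nonneg[OF cnorm_nonneg mu_bd])
  have de: "\<And>x. cnorm ip (eps1 x - eps2 x) \<le> de * cnorm ip x" "0 \<le> de"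
    unfolding de_def
    by (rule opnorm_bound[OF cnorm_nonneg eps_bd]) (rule opnorm_nonneg[OF cnorm_nonneg eps_bd])
  have "0 \<le> nu" using u(2) cnorm_nonneg order_trans by blast
  have "aform ip D b mu1 eps1 u v - aform ip D b mu2 eps2 u v
      = ip (mu1 (D u) - mu2 (D u)) (D v) - ip (eps1 u - eps2 u) v"
    by (simp add: aform_def ip_diff_left)
  also have "cmod \<dots> \<le> cnorm ip (mu1 (D u) - mu2 (D u)) * cnorm ip (D v)
      + cnorm ip (eps1 u - eps2 u) * cnorm ip v"
    by (rule order_trans[OF norm_triangle_ineq4 add_mono]) (rule cauchy_schwarz)+
  also have "\<dots> \<le> (dm * nu) * nv + (de * nu) * nv"
  proof -
    have "cnorm ip (mu1 (D u) - mu2 (D u)) \<le> dm * nu"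
      using dm(1)[of "D u"] mult_left_mono[OF u(1) dm(2)] by linarith
    moreover have "cnorm ip (eps1 u - eps2 u) \<le> de * nu"
      using de(1)[of u] mult_left_mono[OF u(2) de(2)] by linarith
    ultimately show ?thesis
      using v dm(2) de(2) \<open>0 \<le> nu\<close> cnorm_nonneg by (intro add_mono mult_mono) auto
  qed
  finally show ?thesis by (simp add: dm_def de_def algebra_simps)
qed

end

lemma infsup_perturbation:
  fixes a a' :: "'v \<Rightarrow> 'v \<Rightarrow> complex" and n :: "'v \<Rightarrow> real"
  assumes close: "\<And>u v. u \<in> S \<Longrightarrow> v \<in> S \<Longrightarrow> cmod (a u v - a' u v) \<le> \<delta> * (n u * n v)"
    and pos: "\<And>u. u \<in> S \<Longrightarrow> 0 < n u"
    and infsup: "ereal \<gamma> \<le> (INF u\<in>S. SUP v\<in>S. ereal (cmod (a u v) / (n u * n v)))"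
  shows "ereal (\<gamma> - \<delta>) \<le> (INF u\<in>S. SUP v\<in>S. ereal (cmod (a' u v) / (n u * n v)))"
proof (rule INF_greatest)
  fix u assume u: "u \<in> S"
  let ?sup' = "SUP v\<in>S. ereal (cmod (a' u v) / (n u * n v))"
  have "ereal \<gamma> \<le> (SUP v\<in>S. ereal (cmod (a u v) / (n u * n v)))"
    using infsup INF_lower[OF u] by (rule order_trans)
  also have "\<dots> \<le> ?sup' + ereal \<delta>"
  proof (rule SUP_least)
    fix v assume v: "v \<in> S"
    have "0 < n u * n v" using pos u v by simp
    have "cmod (a u v) \<le> cmod (a' u v) + \<delta> * (n u * n v)"
      using norm_triangle_ineq2[of "a u v" "a' u v"] close[OF u v] by linarith
    then have "cmod (a u v) / (n u * n v) \<le> (cmod (a' u v) + \<delta> * (n u * n v)) / (n u * n v)"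
      using \<open>0 < n u * n v\<close> by (simp add: divide_right_mono)
    also have "\<dots> = cmod (a' u v) / (n u * n v) + \<delta>"
      using pos[OF u] pos[OF v] by (simp add: add_divide_distrib)
    finally have "ereal (cmod (a u v) / (n u * n v)) \<le> ereal (cmod (a' u v) / (n u * n v)) + ereal \<delta>"
      by simp
    also have "\<dots> \<le> ?sup' + ereal \<delta>"
      by (rule add_right_mono) (rule SUP_upper[OF v])
    finally show "ereal (cmod (a u v) / (n u * n v)) \<le> ?sup' + ereal \<delta>" .
  qed
  finally show "ereal (\<gamma> - \<delta>) \<le> ?sup'"
    by (simp add: ereal_minus_le[symmetric])
qed

lemma infsup_pos_imp_nonzero:
  fixes a :: "'v \<Rightarrow> 'v \<Rightarrow> complex" and n :: "'v \<Rightarrow> real"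
  assumes "ereal \<gamma> \<le> (INF u\<in>S. SUP v\<in>S. ereal (cmod (a u v) / (n u * n v)))" "0 < \<gamma>" "u \<in> S"
  shows "\<exists>v\<in>S. a u v \<noteq> 0"
proof -
  have "ereal 0 < ereal \<gamma>" using assms(2) by simp
  also have "\<dots> \<le> (INF u\<in>S. SUP v\<in>S. ereal (cmod (a u v) / (n u * n v)))" by (rule assms(1))
  also have "\<dots> \<le> (SUP v\<in>S. ereal (cmod (a u v) / (n u * n v)))" by (rule INF_lower[OF assms(3)])
  finally obtain v where "v \<in> S" "0 < cmod (a u v) / (n u * n v)"
    by (auto simp: less_SUP_iff)
  then show ?thesis by (intro bexI[of _ v]) auto
qed

lemma (in vector_space) linear_inj_on_imp_surj_on:
  assumes f: "Vector_Spaces.linear scale scale f" and S: "subspace S"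
    and B: "finite B" "S \<subseteq> span B"
    and into: "f ` S \<subseteq> S" and inj: "inj_on f S"
  shows "f ` S = S"
proof -
  interpret f: Vector_Spaces.linear scale scale f by (rule f)
  obtain C where C: "C \<subseteq> S" "independent C" "S \<subseteq> span C"
    using maximal_independent_subset by blast
  have span_C: "span C = S" using span_subspace[OF C(1,3) S] .
  have "finite C" using independent_span_bound[OF B(1) C(2)] C(1) B(2) by blast
  have indep: "independent (f ` C)"
    using f.independent_injective_image[OF C(2)] inj by (simp add: span_C)
  have card: "card (f ` C) = card C"
    using card_image inj_on_subset[OF inj C(1)] by blast
  have "S \<subseteq> span (f ` C)"
  proof
    fix x assume x: "x \<in> S"
    show "x \<in> span (f ` C)"
    proof (rule ccontr)
      assume x_new: "x \<notin> span (f ` C)"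
      have "insert x (f ` C) \<subseteq> span C" using x into C(1) span_C by auto
      then have "card (insert x (f ` C)) \<le> card C"
        using independent_span_bound[OF \<open>finite C\<close> independent_insertI[OF x_new indep]] by blast
      moreover have "x \<notin> f ` C" using x_new span_superset by blast
      ultimately show False using card \<open>finite C\<close> by simp
    qed
  qed
  then show ?thesis using into f.span_image[of C] span_C by blast
qed

locale complex_vector_space = vector_space sc for sc :: "complex \<Rightarrow> 'v::ab_group_add \<Rightarrow> 'v"
begin

lemma clinear_on_extends_linear:
  assumes S: "subspace S" and g: "clinear_on sc S g"
  obtains G where "Vector_Spaces.linear sc sc G" "\<And>x. x \<in> S \<Longrightarrow> G x = g x"
proof -
  interpret vector_space_pair sc sc by unfold_locales
  obtain B where B: "B \<subseteq> S" "independent B" "S \<subseteq> span B"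
    using maximal_independent_subset by blast
  define G where "G = construct B g"
  interpret G: Vector_Spaces.linear sc sc G
    unfolding G_def by (rule linear_construct[OF B(2)])
  have g_add: "g (x + y) = g x + g y" and g_scale: "g (sc c x) = sc c (g x)"
    if "x \<in> S" "y \<in> S" for x y c
    using g that unfolding clinear_on_def by blast+
  have "g 0 = 0" using g_add[of 0 0] subspace_0[OF S] by simp
  have "x \<in> S \<and> G x = g x" if "x \<in> span B" for x
    using that
  proof (induction rule: span_induct_alt)
    case base
    show ?case using subspace_0[OF S] \<open>g 0 = 0\<close> by simp
  next
    case (step c x y)
    have "x \<in> S" "sc c x \<in> S" using step(1) B(1) subspace_scale[OF S] by auto
    moreover have "G x = g x" unfolding G_def by (rule construct_basis[OF B(2) step(1)])
    ultimately show ?case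
      using step(2) g_add g_scale subspace_add[OF S] by (simp add: G.add G.scale)
  qed
  then show ?thesis using that G.linear_axioms B(3) by blast
qed

lemma sesq_on_sum_right:
  assumes a: "sesq_on sc S a" and S: "subspace S" and u: "u \<in> S"
    and J: "finite J" "J \<subseteq> S"
  shows "a u (\<Sum>j\<in>J. sc (c j) j) = (\<Sum>j\<in>J. cnj (c j) * a u j)"
  using J
proof (induction J rule: finite_induct)
  case empty
  have "a u (0 + 0) = a u 0 + a u 0"
    using a u subspace_0[OF S] unfolding sesq_on_def by blast
  then show ?case by simp
next
  case (insert j J)
  have "sc (c j) j \<in> S" "(\<Sum>i\<in>J. sc (c i) i) \<in> S"
    using insert S by (auto intro!: subspace_sum subspace_scale)
  then show ?case
    using insert a u unfolding sesq_on_def by simp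
qed

lemma sesq_on_right_nondegenerate:
  assumes a: "sesq_on sc S a" and S: "subspace S" "finite B" "S \<subseteq> span B"
    and left: "\<And>u. u \<in> S - {0} \<Longrightarrow> \<exists>v\<in>S - {0}. a u v \<noteq> 0"
    and v: "v \<in> S - {0}"
  shows "\<exists>u\<in>S - {0}. a u v \<noteq> 0"
proof -
  obtain C where C: "C \<subseteq> S" "independent C" "S \<subseteq> span C"
    using maximal_independent_subset by blast
  have "finite C" using independent_span_bound[OF S(2) C(2)] C(1) S(3) by blast
  have span_C: "span C = S" using span_subspace[OF C(1,3) S(1)] .
  define g where "g u = (\<Sum>j\<in>C. sc (a u j) j)" for u
  have "clinear_on sc S g"
    using a C(1) unfolding clinear_on_def sesq_on_def g_def
    by (auto simp: scale_left_distrib sum.distrib scale_sum_right subset_iff intro!: sum.cong)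
  then obtain G where G: "Vector_Spaces.linear sc sc G" "\<And>x. x \<in> S \<Longrightarrow> G x = g x"
    using clinear_on_extends_linear[OF S(1)] by blast
  interpret G: Vector_Spaces.linear sc sc G by (rule G(1))
  have into: "G ` S \<subseteq> S"
    using G(2) C(1) unfolding g_def by (auto intro!: subspace_sum[OF S(1)] subspace_scale[OF S(1)])
  have "u = 0" if u: "u \<in> S" "G u = 0" for u
  proof (rule ccontr)
    assume "u \<noteq> 0"
    then obtain w where w: "w \<in> S" "a u w \<noteq> 0" using left u(1) by blast
    have "(\<Sum>j\<in>C. sc (a u j) j) = 0" using u G(2) g_def by simp
    then have zero: "\<forall>j\<in>C. a u j = 0"
      using C(2) dependent_finite[OF \<open>finite C\<close>] by blast
    obtain c where "w = (\<Sum>j\<in>C. sc (c j) j)"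
      using w(1) span_finite[OF \<open>finite C\<close>] span_C by auto
    then have "a u w = 0"
      using sesq_on_sum_right[OF a S(1) u(1) \<open>finite C\<close> C(1)] zero by simp
    then show False using w(2) by contradiction
  qed
  then have "inj_on G S" using G.inj_on_iff_eq_0[OF S(1)] by blast
  then have "G ` S = S" by (rule linear_inj_on_imp_surj_on[OF G(1) S into])
  then obtain u where u: "u \<in> S" "v = G u" using v by blast
  have "u \<noteq> 0" using u(2) v by auto
  have v_eq: "v = g u" using u G(2) by simp
  have sum_sq: "a u v = of_real (\<Sum>j\<in>C. (cmod (a u j))\<^sup>2)"
    unfolding v_eq g_def sesq_on_sum_right[OF a S(1) u(1) \<open>finite C\<close> C(1)]
    by (simp add: complex_norm_square[symmetric] mult.commute)
  have "a u v \<noteq> 0"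
  proof
    assume "a u v = 0"
    with sum_sq have "(\<Sum>j\<in>C. (cmod (a u j))\<^sup>2) = 0"
      by (metis of_real_eq_0_iff)
    then have "\<forall>j\<in>C. a u j = 0"
      using sum_nonneg_eq_0_iff[OF \<open>finite C\<close>, of "\<lambda>j. (cmod (a u j))\<^sup>2"] by simp
    then have "v = 0" using v_eq g_def by simp
    then show False using v by simp
  qed
  then show ?thesis using u(1) \<open>u \<noteq> 0\<close> by blast
qed

end

theorem lemma5p4:
  fixes sc :: "complex \<Rightarrow> 'v::ab_group_add \<Rightarrow> 'v"
    and ip0 ipH :: "'v \<Rightarrow> 'v \<Rightarrow> complex"
    and H HN :: "'v set"
    and D :: "'v \<Rightarrow> 'v"
    and b :: "'v \<Rightarrow> 'v \<Rightarrow> complex"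
    and muinv1 muinv2 eps1 eps2 :: "'v \<Rightarrow> 'v"
    and Cdis :: real
  assumes vs: "vector_space sc"
    and H0_hilbert: "chilbert_on sc UNIV ip0"
    and H_hilbert: "chilbert_on sc H ipH"
    and norm_le: "\<forall>v\<in>H. cnorm ip0 v \<le> cnorm ipH v"
    and D_lin: "clinear_on sc H D"
    and D_bd: "\<forall>u\<in>H. cnorm ip0 (D u) \<le> cnorm ipH u"
    and b_sesq: "sesq_on sc H b"
    and b_cont: "\<exists>K. \<forall>u\<in>H. \<forall>v\<in>H. cmod (b u v) \<le> K * cnorm ipH u * cnorm ipH v"
    and mu1_lin: "Vector_Spaces.linear sc sc muinv1"
    and mu2_lin: "Vector_Spaces.linear sc sc muinv2"
    and eps1_lin: "Vector_Spaces.linear sc sc eps1"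
    and eps2_lin: "Vector_Spaces.linear sc sc eps2"
    and mu1_bd: "\<exists>K. \<forall>x. cnorm ip0 (muinv1 x) \<le> K * cnorm ip0 x"
    and mu2_bd: "\<exists>K. \<forall>x. cnorm ip0 (muinv2 x) \<le> K * cnorm ip0 x"
    and eps1_bd: "\<exists>K. \<forall>x. cnorm ip0 (eps1 x) \<le> K * cnorm ip0 x"
    and eps2_bd: "\<exists>K. \<forall>x. cnorm ip0 (eps2 x) \<le> K * cnorm ip0 x"
    and garding1: "\<exists>CG1>0. \<exists>CG2>0. \<forall>v\<in>H.
        cmod (aform ip0 D b muinv1 eps1 v v + complex_of_real (CG2 * (cnorm ip0 v)\<^sup>2))
          \<ge> CG1 * (cnorm ipH v)\<^sup>2"
    and garding2: "\<exists>CG1>0. \<exists>CG2>0. \<forall>v\<in>H.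
        cmod (aform ip0 D b muinv2 eps2 v v + complex_of_real (CG2 * (cnorm ip0 v)\<^sup>2))
          \<ge> CG1 * (cnorm ipH v)\<^sup>2"
    and HN_sub: "module.subspace sc HN" and HN_H: "HN \<subseteq> H"
    and HN_fin: "\<exists>B. finite B \<and> module.span sc B = HN"
    and Cdis_pos: "0 < Cdis"
    and infsup1: "(INF u\<in>HN - {0}. SUP v\<in>HN - {0}.
        ereal (cmod (aform ip0 D b muinv1 eps1 u v) / (cnorm ipH u * cnorm ipH v)))
        \<ge> ereal (1 / Cdis)"
    and nondeg1: "\<forall>v\<in>HN - {0}. (SUP u\<in>HN - {0}. ereal (cmod (aform ip0 D b muinv1 eps1 u v))) > 0"
    and small: "(opnorm (cnorm ip0) (\<lambda>x. muinv1 x - muinv2 x)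
        + opnorm (cnorm ip0) (\<lambda>x. eps1 x - eps2 x)) * Cdis \<le> 1 / 2"
  shows "((INF u\<in>HN - {0}. SUP v\<in>HN - {0}.
        ereal (cmod (aform ip0 D b muinv2 eps2 u v) / (cnorm ipH u * cnorm ipH v)))
        \<ge> ereal (1 / (2 * Cdis))) \<and>
    (\<forall>v\<in>HN - {0}. (SUP u\<in>HN - {0}. ereal (cmod (aform ip0 D b muinv2 eps2 u v))) > 0)"
proof -
  interpret V: complex_vector_space sc by (rule complex_vector_space.intro[OF vs])
  have ci0: "cinner_on sc UNIV ip0" and ciH: "cinner_on sc H ipH"
    using H0_hilbert H_hilbert unfolding chilbert_on_def by blast+
  interpret H0: cinner_space sc ip0 by (rule cinner_space.intro[OF ci0])
  define a2 where "a2 = aform ip0 D b muinv2 eps2"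
  define \<delta> where "\<delta> = opnorm (cnorm ip0) (\<lambda>x. muinv1 x - muinv2 x)
    + opnorm (cnorm ip0) (\<lambda>x. eps1 x - eps2 x)"
  have close: "cmod (aform ip0 D b muinv1 eps1 u v - a2 u v) \<le> \<delta> * (cnorm ipH u * cnorm ipH v)"
    if "u \<in> HN" "v \<in> HN" for u v
    unfolding a2_def \<delta>_def using that HN_H D_bd norm_le
    by (intro H0.aform_diff_le[OF mu1_bd mu2_bd eps1_bd eps2_bd]) auto
  have "ereal (1 / Cdis - \<delta>) \<le> (INF u\<in>HN - {0}. SUP v\<in>HN - {0}.
      ereal (cmod (a2 u v) / (cnorm ipH u * cnorm ipH v)))"
    using close cnorm_pos_on[OF ciH] HN_H infsup1 by (intro infsup_perturbation) auto
  moreover have "1 / (2 * Cdis) \<le> 1 / Cdis - \<delta>"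
    using small Cdis_pos unfolding \<delta>_def by (simp add: field_simps)
  ultimately have infsup2: "ereal (1 / (2 * Cdis)) \<le> (INF u\<in>HN - {0}. SUP v\<in>HN - {0}.
      ereal (cmod (a2 u v) / (cnorm ipH u * cnorm ipH v)))"
    by (meson ereal_less_eq(3) order_trans)
  have sesq2: "sesq_on sc HN a2"
    using H0.aform_sesq_on[OF D_lin b_sesq mu2_lin eps2_lin] HN_H
    unfolding a2_def sesq_on_def by (intro conjI ballI allI; simp add: subset_iff)
  obtain B where B: "finite B" "V.span B = HN" using HN_fin by blast
  have left: "\<exists>v\<in>HN - {0}. a2 u v \<noteq> 0" if "u \<in> HN - {0}" for u
    using infsup_pos_imp_nonzero[OF infsup2 _ that] Cdis_pos by simp
  have "(SUP u\<in>HN - {0}. ereal (cmod (a2 u v))) > 0" if "v \<in> HN - {0}" for v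
    using V.sesq_on_right_nondegenerate[OF sesq2 HN_sub B(1) _ left that] B(2)
    by (auto simp: less_SUP_iff)
  with infsup2 show ?thesis unfolding a2_def by blast
qed

end
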